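(* Let $d\ge1$ and $\lambda=(\lambda_1,\dots,\lambda_d)$ a vector of positive integers with $\sum_t\lambda_t=n\ge2$. If $i\preceq j$ in $P(\lambda)$ (with $i,j\in\{0,\dots,n-2\}$), then also $j-i\preceq j$ in $P(\lambda)$.
   Context: $\Delta_\lambda=\mathrm{conv}(e_1,\dots,e_d,\lambda)\subset\mathbb{R}^d$, with fundamental parallelepiped $\Pi_\lambda=\{\sum_{i=1}^d\gamma_i(1,e_i)+\gamma_{d+1}(1,\lambda):0\le\gamma_i<1\}\subset\mathbb{R}^{d+1}$. The poset $P(\lambda)$ is the set $\Pi_\lambda\cap\mathbb{Z}^{d+1}$ ordered by $\sigma\preceq\mu$ iff $\mu-\sigma\in\Pi_\lambda\cap\mathbb{Z}^{d+1}$ (a reflexive relation). For $0\le b<n-1$ set $p(b)=\left(\sum_{t=1}^d\lceil b\lambda_t/(n-1)\rceil-b,\ \lceil b\lambda_1/(n-1)\rceil,\dots,\lceil b\lambda_d/(n-1)\rceil\right)$; $b\mapsto p(b)$ is a bijection from $\{0,\dots,n-2\}$ onto $\Pi_\lambda\cap\mathbb{Z}^{d+1}$, and each integer $b$ is identified with $p(b)$, so $P(\lambda)$ is a partial order on $\{0,\dots,n-2\}$. *)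

theory Defs
  imports Complex_Main
begin

text \<open>Vectors in Z^(d+1) are functions nat => int, coordinates 0..d
  (coordinate 0 is the first, "height" coordinate). lam is indexed by 1..d.\<close>

definition lam_n :: "nat \<Rightarrow> (nat \<Rightarrow> nat) \<Rightarrow> nat" where
  "lam_n d lam = (\<Sum>t=1..d. lam t)"

definition in_Pi :: "nat \<Rightarrow> (nat \<Rightarrow> nat) \<Rightarrow> (nat \<Rightarrow> int) \<Rightarrow> bool" where
  "in_Pi d lam w \<longleftrightarrow>
     (\<exists>\<gamma> :: nat \<Rightarrow> real.
        (\<forall>i\<in>{1..d+1}. 0 \<le> \<gamma> i \<and> \<gamma> i < 1) \<and>
        real_of_int (w 0) = (\<Sum>i=1..d+1. \<gamma> i) \<and>
        (\<forall>t\<in>{1..d}. real_of_int (w t) = \<gamma> t + \<gamma> (d+1) * real (lam t)))"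

definition pt :: "nat \<Rightarrow> (nat \<Rightarrow> nat) \<Rightarrow> nat \<Rightarrow> (nat \<Rightarrow> int)" where
  "pt d lam b = (\<lambda>k.
     if k = 0 then (\<Sum>t=1..d. \<lceil>real (b * lam t) / real (lam_n d lam - 1)\<rceil>) - int b
     else if k \<le> d then \<lceil>real (b * lam k) / real (lam_n d lam - 1)\<rceil>
     else 0)"

text \<open>The order of P(lam), transported to {0..n-2} via b |-> p(b):
  i precedes j iff p(j) - p(i) lies in Pi_lam (it is automatically integral).\<close>
definition P_le :: "nat \<Rightarrow> (nat \<Rightarrow> nat) \<Rightarrow> nat \<Rightarrow> nat \<Rightarrow> bool" where
  "P_le d lam i j \<longleftrightarrow> in_Pi d lam (\<lambda>k. pt d lam j k - pt d lam i k)"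

end

theory Submission
  imports Defs
begin

text \<open>Eliminating \<open>\<gamma>\<^sub>1, \<dots>, \<gamma>\<^sub>d\<close>, an integer point \<open>w\<close> lies in \<open>\<Pi>\<^sub>\<lambda>\<close> iff some
  \<open>g \<in> [0,1)\<close> makes every \<open>w\<^sub>t - g \<lambda>\<^sub>t\<close> lie in \<open>[0,1)\<close> and \<open>w\<^sub>0 = \<Sum> w\<^sub>t - g (n - 1)\<close>.
  For \<open>w = p(j) - p(i)\<close> the last equation forces \<open>g = (j - i)/(n - 1)\<close>, so with
  \<open>x = (j - i) \<lambda>\<^sub>t/(n - 1)\<close> and \<open>y = i \<lambda>\<^sub>t/(n - 1)\<close> the relation \<open>i \<preceq> j\<close> says
  \<open>\<lceil>x + y\<rceil> - \<lceil>y\<rceil> - x \<in> [0,1)\<close> for all \<open>t\<close>, and \<open>j - i \<preceq> j\<close> says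
  \<open>\<lceil>x + y\<rceil> - \<lceil>x\<rceil> - y \<in> [0,1)\<close>. Since \<open>\<lceil>x + y\<rceil> \<le> \<lceil>x\<rceil> + \<lceil>y\<rceil>\<close>, the inequality
  \<open>\<lceil>x + y\<rceil> - \<lceil>y\<rceil> \<ge> x\<close> forces equality there, and then the second condition reads
  \<open>\<lceil>y\<rceil> - y \<in> [0,1)\<close>.\<close>

lemma ceiling_add_eq_if_le:
  fixes x y :: real
  assumes "x \<le> of_int (\<lceil>x + y\<rceil> - \<lceil>y\<rceil>)"
  shows "\<lceil>x + y\<rceil> = \<lceil>x\<rceil> + \<lceil>y\<rceil>"
proof -
  have "\<lceil>x\<rceil> \<le> \<lceil>x + y\<rceil> - \<lceil>y\<rceil>"
    using assms by (simp add: ceiling_le_iff)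
  with ceiling_add_le[of x y] show ?thesis by linarith
qed

lemma in_Pi_iff:
  "in_Pi d lam w \<longleftrightarrow>
     (\<exists>g::real. g \<in> {0..<1} \<and>
        (\<forall>t\<in>{1..d}. of_int (w t) - g * real (lam t) \<in> {0..<1}) \<and>
        of_int (w 0) = (\<Sum>t=1..d. of_int (w t)) - g * (real (lam_n d lam) - 1))"
  (is "_ \<longleftrightarrow> (\<exists>g. ?C g)")
proof
  assume "in_Pi d lam w"
  then obtain \<gamma> :: "nat \<Rightarrow> real" where
    bounds: "\<forall>i\<in>{1..d+1}. 0 \<le> \<gamma> i \<and> \<gamma> i < 1" and
    height: "of_int (w 0) = (\<Sum>i=1..d+1. \<gamma> i)" and
    coords: "\<forall>t\<in>{1..d}. of_int (w t) = \<gamma> t + \<gamma> (d+1) * real (lam t)"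
    unfolding in_Pi_def by blast
  have "(\<Sum>t=1..d. of_int (w t)) = (\<Sum>t=1..d. \<gamma> t + \<gamma> (d+1) * real (lam t))"
    using coords by (intro sum.cong) auto
  also have "\<dots> = (\<Sum>t=1..d. \<gamma> t) + \<gamma> (d+1) * real (lam_n d lam)"
    by (simp add: lam_n_def sum.distrib sum_distrib_left)
  finally have "?C (\<gamma> (d+1))"
    using bounds height coords by (auto simp: algebra_simps)
  then show "\<exists>g. ?C g" ..
next
  assume "\<exists>g. ?C g"
  then obtain g where C: "?C g" ..
  define \<gamma> where "\<gamma> k = (if k = d+1 then g else of_int (w k) - g * real (lam k))" for k
  have "(\<Sum>i=1..d+1. \<gamma> i) = (\<Sum>t=1..d. of_int (w t)) - g * real (lam_n d lam) + g"
    by (simp add: \<gamma>_def lam_n_def sum_subtractf sum_distrib_left)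
  then show "in_Pi d lam w"
    unfolding in_Pi_def using C
    by (intro exI[of _ \<gamma>]) (auto simp: \<gamma>_def algebra_simps)
qed

lemma pt_height: "pt d lam b 0 = (\<Sum>t=1..d. pt d lam b t) - int b"
  by (simp add: pt_def)

lemma pt_coord: "t \<in> {1..d} \<Longrightarrow> pt d lam b t = \<lceil>real (b * lam t) / real (lam_n d lam - 1)\<rceil>"
  by (simp add: pt_def)

lemma P_le_iff:
  assumes "lam_n d lam \<ge> 2" and "j \<le> lam_n d lam - 2"
  shows "P_le d lam i j \<longleftrightarrow> i \<le> j \<and>
    (\<forall>t\<in>{1..d}. of_int (pt d lam j t - pt d lam i t)
                  - real ((j - i) * lam t) / real (lam_n d lam - 1) \<in> {0..<1})"
proof -
  define N where "N = real (lam_n d lam - 1)"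
  have N_pos: "N > 0" and N_eq: "N = real (lam_n d lam) - 1" and j_lt: "real j < N"
    using assms by (auto simp: N_def of_nat_diff)
  define w where "w k = pt d lam j k - pt d lam i k" for k
  have height: "of_int (w 0) = (\<Sum>t=1..d. of_int (w t)) - (real j - real i)"
    by (simp add: w_def pt_height sum_subtractf)
  have "P_le d lam i j \<longleftrightarrow> (\<exists>g. g \<in> {0..<1} \<and>
          (\<forall>t\<in>{1..d}. of_int (w t) - g * real (lam t) \<in> {0..<1}) \<and> real j - real i = g * N)"
    unfolding P_le_def in_Pi_iff w_def[symmetric] height N_eq by auto
  also have "\<dots> \<longleftrightarrow> (\<exists>g. g = (real j - real i) / N \<and> g \<in> {0..<1} \<and>
          (\<forall>t\<in>{1..d}. of_int (w t) - g * real (lam t) \<in> {0..<1}))"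
    using N_pos by (auto simp: field_simps)
  also have "\<dots> \<longleftrightarrow> i \<le> j \<and>
          (\<forall>t\<in>{1..d}. of_int (w t) - real ((j - i) * lam t) / N \<in> {0..<1})"
  proof -
    have "(real j - real i) / N \<in> {0..<1} \<longleftrightarrow> i \<le> j"
      using N_pos j_lt by (auto simp: field_simps)
    moreover have "(real j - real i) / N * real (lam t) = real ((j - i) * lam t) / N" if "i \<le> j" for t
      using that by (simp add: of_nat_diff)
    ultimately show ?thesis by auto
  qed
  finally show ?thesis by (simp add: w_def N_def)
qed

lemma pt_coord_diff_sub:
  assumes "t \<in> {1..d}" and "i \<le> j"
    and "real ((j - i) * lam t) / real (lam_n d lam - 1) \<le> of_int (pt d lam j t - pt d lam i t)"
  shows "of_int (pt d lam j t - pt d lam (j - i) t) - real (i * lam t) / real (lam_n d lam - 1)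
           \<in> {0..<1}"
proof -
  define x where "x = real ((j - i) * lam t) / real (lam_n d lam - 1)"
  define y where "y = real (i * lam t) / real (lam_n d lam - 1)"
  have "x + y = real (j * lam t) / real (lam_n d lam - 1)"
    using \<open>i \<le> j\<close> by (simp add: x_def y_def add_divide_distrib[symmetric] of_nat_diff algebra_simps)
  then have pt_eq: "pt d lam j t = \<lceil>x + y\<rceil>" "pt d lam i t = \<lceil>y\<rceil>" "pt d lam (j - i) t = \<lceil>x\<rceil>"
    using assms(1) by (simp_all add: pt_coord x_def y_def)
  have "\<lceil>x + y\<rceil> = \<lceil>x\<rceil> + \<lceil>y\<rceil>"
    using assms(3) unfolding pt_eq x_def[symmetric] by (rule ceiling_add_eq_if_le)
  then have "of_int (pt d lam j t - pt d lam (j - i) t) - y \<in> {0..<1}"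
    by (simp add: pt_eq) linarith
  then show ?thesis
    by (simp add: y_def)
qed

theorem proposition2p14:
  fixes d :: nat and lam :: "nat \<Rightarrow> nat" and i j :: nat
  assumes "d \<ge> 1"
    and "\<forall>t\<in>{1..d}. lam t > 0"
    and "lam_n d lam \<ge> 2"
    and "i \<le> lam_n d lam - 2" and "j \<le> lam_n d lam - 2"
    and "P_le d lam i j"
  shows "P_le d lam (j - i) j"
proof -
  from assms(6) have "i \<le> j"
    and ij: "\<forall>t\<in>{1..d}. of_int (pt d lam j t - pt d lam i t)
                  - real ((j - i) * lam t) / real (lam_n d lam - 1) \<in> {0..<1}"
    using P_le_iff[OF assms(3,5)] by auto
  have "\<forall>t\<in>{1..d}. of_int (pt d lam j t - pt d lam (j - i) t)
                  - real (i * lam t) / real (lam_n d lam - 1) \<in> {0..<1}"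
  proof
    fix t assume t: "t \<in> {1..d}"
    with ij show "of_int (pt d lam j t - pt d lam (j - i) t)
                  - real (i * lam t) / real (lam_n d lam - 1) \<in> {0..<1}"
      by (intro pt_coord_diff_sub[OF t \<open>i \<le> j\<close>]) auto
  qed
  then show ?thesis
    using P_le_iff[OF assms(3,5)] \<open>i \<le> j\<close> by simp
qed

end
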